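(* Assume the hypotheses in the context. If $(u_n)\subset\mathcal N$ satisfies $I(u_n)\to c$, then $(u_n)$ is bounded in $E$.
   Context: Let $s\in(0,1)$, $\mu\in(0,2)$. $V\in C(\mathbb{R}^2,\mathbb{R})$ satisfies (V1) $V\ge V_0>0$ and (V2) $|\{V\le M\}|<\infty$ for all $M>0$. $f$ satisfies (f1) $f\in C^1(\mathbb{R})$, $f(t)/(\exp(\alpha t^2)-1)\to0$ as $|t|\to\infty$ for all $\alpha>0$; (f2) $f(t)/t\to0$ as $t\to0$; (f3) $t\mapsto f(t)/t$ strictly increasing on $(0,\infty)$; (f4) there is $\theta>1$ with $f(t)t\ge\theta F(t)\ge0$ for all $t$; (f5) $f(t)=0$ for $t\le0$. $F(t)=\int_0^tf$. $E=\{u\in H^1(\mathbb{R}^2):\int Vu^2<\infty\}$, $\|u\|^2=\int|\nabla u|^2+\frac12\iint\frac{|u(x)-u(y)|^2}{|x-y|^{2+2s}}dxdy+\int Vu^2$ (with associated inner product $\langle\cdot,\cdot\rangle$). $I(u)=\frac12\|u\|^2-\frac12\int(|x|^{-\mu}*F(u))F(u)\,dx$, $I'(u)[v]=\langle u,v\rangle-\int(|x|^{-\mu}*F(u))f(u)v\,dx$, $\mathcal N=\{u\in E\setminus\{0\}:I'(u)[u]=0\}$, $c=\inf_{\mathcal N}I$. *)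

theory Defs
  imports "HOL-Analysis.Analysis"
begin

type_synonym R2 = "real^2"

coinductive smooth_fun :: "(R2 \<Rightarrow> real) \<Rightarrow> bool" where
  "(\<forall>x. \<phi> differentiable (at x)) \<Longrightarrow>
   (\<forall>i::2. smooth_fun (\<lambda>x. frechet_derivative \<phi> (at x) (axis i 1))) \<Longrightarrow> smooth_fun \<phi>"

definition test_fun :: "(R2 \<Rightarrow> real) \<Rightarrow> bool" where
  "test_fun \<phi> \<longleftrightarrow> smooth_fun \<phi> \<and> compact (closure {x. \<phi> x \<noteq> 0})"

definition weak_grad :: "(R2 \<Rightarrow> real) \<Rightarrow> (R2 \<Rightarrow> R2) \<Rightarrow> bool" where
  "weak_grad u g \<longleftrightarrow> g \<in> borel_measurable lborel \<and>
     (\<forall>\<phi>. test_fun \<phi> \<longrightarrow> (\<forall>i::2.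
        (\<integral>x. u x * frechet_derivative \<phi> (at x) (axis i 1) \<partial>lborel)
        = - (\<integral>x. g x $ i * \<phi> x \<partial>lborel)))"

definition H1 :: "(R2 \<Rightarrow> real) set" where
  "H1 = {u. u \<in> borel_measurable lborel \<and> integrable lborel (\<lambda>x. (u x)\<^sup>2) \<and>
            (\<exists>g. weak_grad u g \<and> integrable lborel (\<lambda>x. (norm (g x))\<^sup>2))}"

definition grad :: "(R2 \<Rightarrow> real) \<Rightarrow> R2 \<Rightarrow> R2" where
  "grad u = (SOME g. weak_grad u g \<and> integrable lborel (\<lambda>x. (norm (g x))\<^sup>2))"

definition Espace :: "(R2 \<Rightarrow> real) \<Rightarrow> (R2 \<Rightarrow> real) set" where
  "Espace V = {u \<in> H1. integrable lborel (\<lambda>x. V x * (u x)\<^sup>2)}"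

definition Einner :: "real \<Rightarrow> (R2 \<Rightarrow> real) \<Rightarrow> (R2 \<Rightarrow> real) \<Rightarrow> (R2 \<Rightarrow> real) \<Rightarrow> real" where
  "Einner s V u v =
     (\<integral>x. grad u x \<bullet> grad v x \<partial>lborel)
   + 1/2 * (\<integral>x. (\<integral>y. ((u x - u y) * (v x - v y) / (norm (x - y) powr (2 + 2 * s))) \<partial>lborel) \<partial>lborel)
   + (\<integral>x. V x * u x * v x \<partial>lborel)"

definition Enorm :: "real \<Rightarrow> (R2 \<Rightarrow> real) \<Rightarrow> (R2 \<Rightarrow> real) \<Rightarrow> real" where
  "Enorm s V u = sqrt (Einner s V u u)"

definition primF :: "(real \<Rightarrow> real) \<Rightarrow> real \<Rightarrow> real" where
  "primF f t = (if 0 \<le> t then integral {0..t} f else - integral {t..0} f)"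

definition riesz_conv :: "real \<Rightarrow> (real \<Rightarrow> real) \<Rightarrow> (R2 \<Rightarrow> real) \<Rightarrow> R2 \<Rightarrow> real" where
  "riesz_conv \<mu> f u x = (\<integral>y. (primF f (u y) / (norm (x - y) powr \<mu>)) \<partial>lborel)"

definition Ifun :: "real \<Rightarrow> real \<Rightarrow> (R2 \<Rightarrow> real) \<Rightarrow> (real \<Rightarrow> real) \<Rightarrow> (R2 \<Rightarrow> real) \<Rightarrow> real" where
  "Ifun s \<mu> V f u = 1/2 * (Enorm s V u)\<^sup>2
      - 1/2 * (\<integral>x. riesz_conv \<mu> f u x * primF f (u x) \<partial>lborel)"

definition dI :: "real \<Rightarrow> real \<Rightarrow> (R2 \<Rightarrow> real) \<Rightarrow> (real \<Rightarrow> real) \<Rightarrow> (R2 \<Rightarrow> real) \<Rightarrow> (R2 \<Rightarrow> real) \<Rightarrow> real" where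
  "dI s \<mu> V f u v = Einner s V u v
      - (\<integral>x. riesz_conv \<mu> f u x * f (u x) * v x \<partial>lborel)"

text \<open>Nehari manifold; u \<noteq> 0 in E means u is not a.e. zero.\<close>
definition Nehari :: "real \<Rightarrow> real \<Rightarrow> (R2 \<Rightarrow> real) \<Rightarrow> (real \<Rightarrow> real) \<Rightarrow> (R2 \<Rightarrow> real) set" where
  "Nehari s \<mu> V f = {u \<in> Espace V. \<not> (AE x in lborel. u x = 0) \<and> dI s \<mu> V f u u = 0}"

definition cNehari :: "real \<Rightarrow> real \<Rightarrow> (R2 \<Rightarrow> real) \<Rightarrow> (real \<Rightarrow> real) \<Rightarrow> real" where
  "cNehari s \<mu> V f = Inf (Ifun s \<mu> V f ` Nehari s \<mu> V f)"

end

theory Submission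
  imports Defs
begin

text \<open>On the Nehari manifold \<open>\<parallel>u\<parallel>\<^sup>2 = \<integral>(|x|\<^sup>-\<^sup>\<mu> * F(u)) f(u) u\<close>, and the
  Ambrosetti--Rabinowitz condition (f4) bounds this from below by
  \<open>\<theta> \<integral>(|x|\<^sup>-\<^sup>\<mu> * F(u)) F(u)\<close>. Hence \<open>I(u) \<ge> (1/2 - 1/(2\<theta>)) \<parallel>u\<parallel>\<^sup>2\<close>, and a sequence
  with convergent, hence bounded, energies is bounded in \<open>E\<close>. Only (f4) and the
  Nehari identity are needed.\<close>

text \<open>The disjunct covers a non-integrable \<open>h\<close>, whose Bochner integral is \<open>0\<close>.\<close>
lemma integral_mult_le_or_zero:
  fixes g h :: "'a \<Rightarrow> real"
  assumes "\<And>x. x \<in> space M \<Longrightarrow> c * g x \<le> h x" "\<And>x. x \<in> space M \<Longrightarrow> 0 \<le> h x"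
  shows "c * integral\<^sup>L M g \<le> integral\<^sup>L M h \<or> integral\<^sup>L M h = 0"
proof (cases "integrable M h")
  case True
  have "c * integral\<^sup>L M g = (\<integral>x. c * g x \<partial>M)" by simp
  also have "\<dots> \<le> integral\<^sup>L M h" using True assms by (rule integral_mono')
  finally show ?thesis ..
next
  case False
  then show ?thesis by (simp add: not_integrable_integral_eq)
qed

lemma riesz_conv_nonneg:
  assumes "\<And>t. 0 \<le> primF f t"
  shows "0 \<le> riesz_conv \<mu> f u x"
  unfolding riesz_conv_def
  by (rule integral_nonneg_AE) (simp add: assms)

lemma Nehari_energy_lower_bound:
  assumes \<theta>: "\<theta> > 1"
    and AR: "\<And>t. \<theta> * primF f t \<le> f t * t" "\<And>t. 0 \<le> \<theta> * primF f t"
    and Nehari: "dI s \<mu> V f u u = 0"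
  shows "Enorm s V u = 0 \<or> (\<theta> - 1) / (2 * \<theta>) * (Enorm s V u)\<^sup>2 \<le> Ifun s \<mu> V f u"
proof -
  define R where "R = riesz_conv \<mu> f u"
  define A where "A = (\<integral>x. R x * primF f (u x) \<partial>lborel)"
  define B where "B = (\<integral>x. R x * f (u x) * u x \<partial>lborel)"
  have F_nonneg: "0 \<le> primF f t" for t
    using AR(2)[of t] \<theta> by (simp add: zero_le_mult_iff)
  have R_nonneg: "0 \<le> R x" for x
    unfolding R_def using F_nonneg by (rule riesz_conv_nonneg)
  have "R x * (\<theta> * primF f (u x)) \<le> R x * (f (u x) * u x)" for x
    by (intro mult_left_mono AR(1) R_nonneg)
  then have AR_integrands: "\<theta> * (R x * primF f (u x)) \<le> R x * f (u x) * u x" for x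
    by (simp add: algebra_simps)
  have B_integrand_nonneg: "0 \<le> R x * f (u x) * u x" for x
    using R_nonneg[of x] AR(2)[of "u x"] AR_integrands[of x]
    by (smt (verit) mult_nonneg_nonneg mult.left_commute)
  have B_nonneg: "0 \<le> B"
    unfolding B_def using B_integrand_nonneg by (simp add: integral_nonneg_AE)
  have norm_eq: "(Enorm s V u)\<^sup>2 = B"
    using Nehari B_nonneg unfolding Enorm_def dI_def B_def R_def by simp
  have energy_eq: "Ifun s \<mu> V f u = B / 2 - A / 2"
    unfolding Ifun_def norm_eq A_def R_def by simp
  have "\<theta> * A \<le> B \<or> B = 0"
    unfolding A_def B_def using AR_integrands B_integrand_nonneg
    by (rule integral_mult_le_or_zero)
  then show ?thesis
  proof
    assume "\<theta> * A \<le> B"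
    then have "(\<theta> - 1) / (2 * \<theta>) * B \<le> B / 2 - A / 2"
      using \<theta> by (simp add: field_simps)
    then show ?thesis using norm_eq energy_eq by simp
  next
    assume "B = 0"
    then show ?thesis using norm_eq by simp
  qed
qed

lemma bounded_above_if_Bseq_quadratic_bound:
  fixes x y :: "nat \<Rightarrow> real"
  assumes "k > 0" and "Bseq y" and "\<And>n. x n = 0 \<or> k * (x n)\<^sup>2 \<le> y n"
  shows "\<exists>C. \<forall>n. x n \<le> C"
proof -
  obtain K where K: "\<And>n. \<bar>y n\<bar> \<le> K"
    using \<open>Bseq y\<close> by (metis BseqE real_norm_def)
  have "x n \<le> sqrt (K / k)" for n
  proof (cases "x n = 0")
    case True
    have "0 \<le> K" using K[of n] by linarith
    then show ?thesis using True \<open>k > 0\<close> by simp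
  next
    case False
    then have "k * (x n)\<^sup>2 \<le> K" using assms(3)[of n] K[of n] by linarith
    then have "(x n)\<^sup>2 \<le> K / k" using \<open>k > 0\<close> by (simp add: field_simps)
    then have "\<bar>x n\<bar> \<le> sqrt (K / k)" using real_sqrt_le_mono by fastforce
    then show ?thesis by linarith
  qed
  then show ?thesis by blast
qed

theorem lemma3p4:
  fixes s \<mu> V0 :: real and V :: "R2 \<Rightarrow> real" and f :: "real \<Rightarrow> real"
    and u :: "nat \<Rightarrow> R2 \<Rightarrow> real"
  assumes s: "0 < s" "s < 1"
    and mu: "0 < \<mu>" "\<mu> < 2"
    and Vcont: "continuous_on UNIV V"
    and V1: "0 < V0" "\<forall>x. V0 \<le> V x"
    and V2: "\<forall>M>0. emeasure lborel {x. V x \<le> M} < \<infinity>"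
    and f1: "f C1_differentiable_on UNIV"
        "\<forall>\<alpha>>0. ((\<lambda>t. f t / (exp (\<alpha> * t\<^sup>2) - 1)) \<longlongrightarrow> 0) at_infinity"
    and f2: "((\<lambda>t. f t / t) \<longlongrightarrow> 0) (at 0)"
    and f3: "strict_mono_on {0<..} (\<lambda>t. f t / t)"
    and f4: "\<exists>\<theta>>1. \<forall>t. f t * t \<ge> \<theta> * primF f t \<and> \<theta> * primF f t \<ge> 0"
    and f5: "\<forall>t\<le>0. f t = 0"
    and uN: "\<forall>n. u n \<in> Nehari s \<mu> V f"
    and Ic: "(\<lambda>n. Ifun s \<mu> V f (u n)) \<longlonglongrightarrow> cNehari s \<mu> V f"
  shows "\<exists>C. \<forall>n. Enorm s V (u n) \<le> C"
proof -
  obtain \<theta> where \<theta>: "\<theta> > 1" and AR: "\<forall>t. f t * t \<ge> \<theta> * primF f t \<and> \<theta> * primF f t \<ge> 0"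
    using f4 by blast
  have "Enorm s V (u n) = 0 \<or> (\<theta> - 1) / (2 * \<theta>) * (Enorm s V (u n))\<^sup>2 \<le> Ifun s \<mu> V f (u n)"
    for n
    using \<theta> AR uN by (intro Nehari_energy_lower_bound) (auto simp: Nehari_def)
  moreover have "Bseq (\<lambda>n. Ifun s \<mu> V f (u n))"
    using Ic by (intro convergent_imp_Bseq convergentI)
  moreover have "(\<theta> - 1) / (2 * \<theta>) > 0"
    using \<theta> by simp
  ultimately show ?thesis
    by (intro bounded_above_if_Bseq_quadratic_bound)
qed

end
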